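(* Let $I\subseteq\mathbb{R}$ be an interval, let $f:I\to\mathbb{R}$ be differentiable on the interior $I^{\circ}$, let $a,b\in I^{\circ}$ with $a<b$, assume $f'\in L[a,b]$, and let $\alpha,\lambda\in[0,1]$. Suppose that $|f'|^{q}$ is convex on $[a,b]$ for some $q>1$, and let $p$ satisfy $\frac1p+\frac1q=1$. Define $$I_f(\lambda,\alpha,a,b)=\lambda\big(\alpha f(a)+(1-\alpha)f(b)\big)+(1-\lambda)f(\alpha a+(1-\alpha)b)-\frac{1}{b-a}\int_a^b f(x)\,dx,$$ $$C_f(\alpha,q)=(1-\alpha)\big[|f'((1-\alpha)b+\alpha a)|^q+|f'(a)|^q\big],\qquad D_f(\alpha,q)=\alpha\big[|f'((1-\alpha)b+\alpha a)|^q+|f'(b)|^q\big],$$ $$\varepsilon_1(\alpha,\lambda,p)=(\alpha\lambda)^{p+1}+(1-\alpha-\alpha\lambda)^{p+1},\qquad \varepsilon_2(\alpha,\lambda,p)=(\alpha\lambda)^{p+1}-(\alpha\lambda-1+\alpha)^{p+1}.$$ Then $|I_f(\lambda,\alpha,a,b)|\leq (b-a)\left(\frac{1}{p+1}\right)^{1/p}\left(\frac{1}{2}\right)^{1/q}\cdot K$, where $K=\varepsilon_1^{1/p}(\alpha,\lambda,p)C_f^{1/q}(\alpha,q)+\varepsilon_1^{1/p}(1-\alpha,\lambda,p)D_f^{1/q}(\alpha,q)$ if $\alpha\lambda\leq 1-\alpha\leq 1-\lambda(1-\alpha)$; $K=\varepsilon_1^{1/p}(\alpha,\lambda,p)C_f^{1/q}(\alpha,q)+\varepsilon_2^{1/p}(1-\alpha,\lambda,p)D_f^{1/q}(\alpha,q)$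 if $\alpha\lambda\leq 1-\lambda(1-\alpha)\leq 1-\alpha$; $K=\varepsilon_2^{1/p}(\alpha,\lambda,p)C_f^{1/q}(\alpha,q)+\varepsilon_1^{1/p}(1-\alpha,\lambda,p)D_f^{1/q}(\alpha,q)$ if $1-\alpha\leq\alpha\lambda\leq 1-\lambda(1-\alpha)$. *)

theory Defs
  imports "HOL-Analysis.Analysis"
begin

definition I_f :: "(real \<Rightarrow> real) \<Rightarrow> real \<Rightarrow> real \<Rightarrow> real \<Rightarrow> real \<Rightarrow> real" where
  "I_f f lam al a b =
     lam * (al * f a + (1 - al) * f b) + (1 - lam) * f (al * a + (1 - al) * b)
     - (1 / (b - a)) * integral {a..b} f"

definition C_f :: "(real \<Rightarrow> real) \<Rightarrow> real \<Rightarrow> real \<Rightarrow> real \<Rightarrow> real \<Rightarrow> real" where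
  "C_f f' a b al q = (1 - al) * (\<bar>f' ((1 - al) * b + al * a)\<bar> powr q + \<bar>f' a\<bar> powr q)"

definition D_f :: "(real \<Rightarrow> real) \<Rightarrow> real \<Rightarrow> real \<Rightarrow> real \<Rightarrow> real \<Rightarrow> real" where
  "D_f f' a b al q = al * (\<bar>f' ((1 - al) * b + al * a)\<bar> powr q + \<bar>f' b\<bar> powr q)"

definition eps1 :: "real \<Rightarrow> real \<Rightarrow> real \<Rightarrow> real" where
  "eps1 al lam p = (al * lam) powr (p + 1) + (1 - al - al * lam) powr (p + 1)"

definition eps2 :: "real \<Rightarrow> real \<Rightarrow> real \<Rightarrow> real" where
  "eps2 al lam p = (al * lam) powr (p + 1) - (al * lam - 1 + al) powr (p + 1)"

end

theory Submission
  imports Defs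
begin

text \<open>
  Put c = al a + (1 - al) b, u = a + al lam (b - a) and v = b - lam (1 - al) (b - a).
  Integrating by parts, (b - a) I_f is the sum of the integrals of (x - u) f'(x) over [a, c] and of
  (x - v) f'(x) over [c, b]: the nodes u and v are placed so that the boundary terms are exactly the
  weighted values of f in I_f. Each integral is estimated by Hoelder's inequality. The kernel integral of
  |x - u|^p is elementary, and equals (b - a)^(p+1)/(p+1) times eps1 or eps2 according as u lies inside
  [a, c] or beyond it (dually for v on [c, b]); convexity of |f'|^q bounds the integral of |f'|^q over
  [s, e] by (e - s)(|f'(s)|^q + |f'(e)|^q)/2, the right-hand Hermite-Hadamard inequality.
\<close>

lemma conjugate_exponent_gt_1:
  fixes p q :: real
  assumes "q > 1" and "1 / p + 1 / q = 1"
  shows "p > 1"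
proof -
  have "0 < 1 / q" "1 / q < 1" using assms(1) by simp_all
  then have "0 < 1 / p" "1 / p < 1" using assms(2) by linarith+
  then show ?thesis by (simp add: field_simps)
qed

lemma convex_on_Icc_le_chord:
  fixes h :: "real \<Rightarrow> real"
  assumes "s < e" and "convex_on {s..e} h" and "x \<in> {s..e}"
  shows "h x \<le> ((e - x) * h s + (x - s) * h e) / (e - s)"
proof -
  have "h x \<le> (h e - h s) / (e - s) * (x - s) + h s"
    using convex_onD_Icc'[OF assms(2,3)] by simp
  also have "\<dots> = ((e - x) * h s + (x - s) * h e) / (e - s)"
    using assms(1) by (simp add: field_simps)
  finally show ?thesis .
qed

lemma has_integral_linear_interpolation:
  fixes s e A B :: real
  assumes "s < e"
  shows "((\<lambda>x. ((e - x) * A + (x - s) * B) / (e - s)) has_integral (e - s) * (A + B) / 2) {s..e}"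
proof -
  define F where "F x = ((x - s)\<^sup>2 * B - (e - x)\<^sup>2 * A) / (2 * (e - s))" for x
  have "((\<lambda>x. ((e - x) * A + (x - s) * B) / (e - s)) has_integral (F e - F s)) {s..e}"
  proof (rule fundamental_theorem_of_calculus)
    fix x assume "x \<in> {s..e}"
    have "(F has_real_derivative ((e - x) * A + (x - s) * B) / (e - s)) (at x within {s..e})"
      unfolding F_def using assms
      by (auto intro!: derivative_eq_intros) (simp add: divide_simps algebra_simps)
    then show "(F has_vector_derivative ((e - x) * A + (x - s) * B) / (e - s)) (at x within {s..e})"
      by (simp add: has_real_derivative_iff_has_vector_derivative)
  qed (use assms in simp)
  moreover have "F e - F s = (e - s) * (A + B) / 2"
  proof -
    have "F e - F s = (e - s)\<^sup>2 * (A + B) / (2 * (e - s))"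
      by (simp add: F_def diff_divide_distrib[symmetric] algebra_simps power2_eq_square)
    also have "\<dots> = (e - s) * (A + B) / 2"
      using assms by (simp add: power2_eq_square field_simps)
    finally show ?thesis .
  qed
  ultimately show ?thesis by simp
qed

lemma convex_on_integrable_on_Icc:
  fixes h :: "real \<Rightarrow> real"
  assumes "s < e" and "convex_on {s..e} h" and "\<And>x. x \<in> {s..e} \<Longrightarrow> h x \<ge> 0"
    and "h \<in> borel_measurable (lebesgue_on {s..e})"
  shows "h integrable_on {s..e}"
proof (rule measurable_bounded_by_integrable_imp_integrable[OF assms(4)])
  show "(\<lambda>x. ((e - x) * h s + (x - s) * h e) / (e - s)) integrable_on {s..e}"
    using has_integral_linear_interpolation[OF assms(1)] by blast
  show "norm (h x) \<le> ((e - x) * h s + (x - s) * h e) / (e - s)" if "x \<in> {s..e}" for x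
    using convex_on_Icc_le_chord[OF assms(1,2) that] assms(3)[OF that] by simp
qed auto

lemma integral_convex_on_le_trapezoid:
  fixes h :: "real \<Rightarrow> real"
  assumes "s < e" and "convex_on {s..e} h" and "h integrable_on {s..e}"
  shows "integral {s..e} h \<le> (e - s) * (h s + h e) / 2"
proof -
  note chord = has_integral_linear_interpolation[OF assms(1), of "h s" "h e"]
  have "integral {s..e} h \<le> integral {s..e} (\<lambda>x. ((e - x) * h s + (x - s) * h e) / (e - s))"
    by (rule integral_le[OF assms(3) has_integral_integrable[OF chord] convex_on_Icc_le_chord[OF assms(1,2)]])
  then show ?thesis
    by (simp only: integral_unique[OF chord])
qed

lemma Holder_integral_le:
  fixes F G :: "'a::euclidean_space \<Rightarrow> real"
  assumes pq: "p > 1" "q > 1" "1 / p + 1 / q = 1"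
    and F0: "\<And>x. x \<in> S \<Longrightarrow> F x \<ge> 0" and G0: "\<And>x. x \<in> S \<Longrightarrow> G x \<ge> 0"
    and iF: "(\<lambda>x. F x powr p) integrable_on S" and iG: "(\<lambda>x. G x powr q) integrable_on S"
    and iFG: "(\<lambda>x. F x * G x) integrable_on S"
    and FA: "integral S (\<lambda>x. F x powr p) \<le> A" and GM: "integral S (\<lambda>x. G x powr q) \<le> M"
    and A0: "A > 0" and M0: "M > 0"
  shows "integral S (\<lambda>x. F x * G x) \<le> A powr (1 / p) * M powr (1 / q)"
proof -
  define a where "a = A powr (1 / p)"
  define m where "m = M powr (1 / q)"
  have a0: "a > 0" and m0: "m > 0" using A0 M0 by (auto simp: a_def m_def)
  have ap: "a powr p = A" using A0 pq(1) by (simp add: a_def powr_powr)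
  have mq: "m powr q = M" using M0 pq(2) by (simp add: m_def powr_powr)
  have Young: "F x * G x / (a * m) \<le> F x powr p / (p * A) + G x powr q / (q * M)" if "x \<in> S" for x
  proof -
    have "F x * G x / (a * m) = (F x / a) * (G x / m)" by simp
    also have "\<dots> \<le> (F x / a) powr p / p + (G x / m) powr q / q"
      using Youngs_inequality[OF pq, of "F x / a" "G x / m"] F0[OF that] G0[OF that] a0 m0 by simp
    also have "\<dots> = F x powr p / (p * A) + G x powr q / (q * M)"
      using F0[OF that] G0[OF that] a0 m0 by (simp add: powr_divide ap mq ac_simps)
    finally show ?thesis .
  qed
  have iF': "(\<lambda>x. F x powr p / (p * A)) integrable_on S"
    and iG': "(\<lambda>x. G x powr q / (q * M)) integrable_on S"
    using iF iG by (auto intro: integrable_on_divide)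
  have "integral S (\<lambda>x. F x * G x) / (a * m) = integral S (\<lambda>x. F x * G x / (a * m))"
    by simp
  also have "\<dots> \<le> integral S (\<lambda>x. F x powr p / (p * A) + G x powr q / (q * M))"
    using Young by (intro integral_le integrable_add iF' iG' integrable_on_divide iFG) auto
  also have "\<dots> = integral S (\<lambda>x. F x powr p) / (p * A) + integral S (\<lambda>x. G x powr q) / (q * M)"
    using integral_add[OF iF' iG'] by simp
  also have "\<dots> \<le> A / (p * A) + M / (q * M)"
    using FA GM A0 M0 pq by (intro add_mono divide_right_mono) auto
  also have "\<dots> = 1" using A0 M0 pq(3) by simp
  finally show ?thesis using a0 m0 by (simp add: a_def m_def divide_le_eq)
qed

lemma has_integral_abs_diff_powr_right:
  fixes p u s e :: real
  assumes "p > 0" and "u \<le> s" and "s \<le> e"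
  shows "((\<lambda>x. \<bar>x - u\<bar> powr p) has_integral ((e - u) powr (p + 1) - (s - u) powr (p + 1)) / (p + 1)) {s..e}"
proof -
  define F where "F x = (x - u) powr (p + 1) / (p + 1)" for x
  have "((\<lambda>x. \<bar>x - u\<bar> powr p) has_integral (F e - F s)) {s..e}"
  proof (rule fundamental_theorem_of_calculus_interior)
    show "continuous_on {s..e} F" unfolding F_def using assms
      by (auto intro!: continuous_intros continuous_on_powr')
    fix x assume "x \<in> {s<..<e}"
    then have "x - u > 0" using assms by auto
    then have "(F has_real_derivative \<bar>x - u\<bar> powr p) (at x)"
      unfolding F_def using assms by (auto intro!: derivative_eq_intros)
    then show "(F has_vector_derivative \<bar>x - u\<bar> powr p) (at x)"
      by (simp add: has_real_derivative_iff_has_vector_derivative)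
  qed fact
  then show ?thesis by (simp add: F_def diff_divide_distrib)
qed

lemma has_integral_abs_diff_powr_left:
  fixes p u s e :: real
  assumes "p > 0" and "s \<le> e" and "e \<le> u"
  shows "((\<lambda>x. \<bar>x - u\<bar> powr p) has_integral ((u - s) powr (p + 1) - (u - e) powr (p + 1)) / (p + 1)) {s..e}"
proof -
  define F where "F x = - ((u - x) powr (p + 1) / (p + 1))" for x
  have "((\<lambda>x. \<bar>x - u\<bar> powr p) has_integral (F e - F s)) {s..e}"
  proof (rule fundamental_theorem_of_calculus_interior)
    show "continuous_on {s..e} F" unfolding F_def using assms
      by (auto intro!: continuous_intros continuous_on_powr')
    fix x assume "x \<in> {s<..<e}"
    then have "u - x > 0" using assms by auto
    then have "(F has_real_derivative \<bar>x - u\<bar> powr p) (at x)"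
      unfolding F_def using assms by (auto intro!: derivative_eq_intros)
    then show "(F has_vector_derivative \<bar>x - u\<bar> powr p) (at x)"
      by (simp add: has_real_derivative_iff_has_vector_derivative)
  qed fact
  then show ?thesis by (simp add: F_def diff_divide_distrib)
qed

lemma has_integral_abs_diff_powr_between:
  fixes p u s e :: real
  assumes "p > 0" and "s \<le> u" and "u \<le> e"
  shows "((\<lambda>x. \<bar>x - u\<bar> powr p) has_integral ((u - s) powr (p + 1) + (e - u) powr (p + 1)) / (p + 1)) {s..e}"
  using has_integral_combine[OF assms(2,3)
      has_integral_abs_diff_powr_left[OF assms(1,2) order_refl]
      has_integral_abs_diff_powr_right[OF assms(1) order_refl assms(3)]] assms(1)
  by (simp add: add_divide_distrib)

lemma has_integral_abs_diff_powr_pos: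
  fixes p u s e A :: real
  assumes "p > 0" and "s < e" and "((\<lambda>x. \<bar>x - u\<bar> powr p) has_integral A) {s..e}"
  shows "A > 0"
proof -
  have "A \<ge> 0" using has_integral_nonneg[OF assms(3)] by simp
  moreover have "A \<noteq> 0"
  proof
    assume "A = 0"
    have "continuous_on {s..e} (\<lambda>x. \<bar>x - u\<bar> powr p)"
      using assms(1) by (auto intro!: continuous_intros continuous_on_powr')
    then have "\<bar>x - u\<bar> powr p = 0" if "x \<in> {s..e}" for x
      using has_integral_0_cbox_imp_0[of s e "\<lambda>x. \<bar>x - u\<bar> powr p" x] assms that \<open>A = 0\<close>
      by auto
    then have "s = u" "e = u" using assms(2) by auto
    then show False using assms(2) by simp
  qed
  ultimately show ?thesis by simp
qed

lemma has_integral_affine_times_deriv: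
  fixes f f' :: "real \<Rightarrow> real" and s e u :: real
  assumes der: "\<And>x. x \<in> {s..e} \<Longrightarrow> (f has_real_derivative f' x) (at x)"
    and "s \<le> e"
  shows "((\<lambda>x. (x - u) * f' x) has_integral (e - u) * f e - (s - u) * f s - integral {s..e} f) {s..e}"
proof -
  have "continuous_on {s..e} f"
    using der by (intro continuous_at_imp_continuous_on) (meson DERIV_isCont)
  then have f: "(f has_integral integral {s..e} f) {s..e}"
    by (intro integrable_integral integrable_continuous_interval)
  have "((\<lambda>x. f x + (x - u) * f' x) has_integral (e - u) * f e - (s - u) * f s) {s..e}"
  proof (rule fundamental_theorem_of_calculus[OF \<open>s \<le> e\<close>])
    fix x assume x: "x \<in> {s..e}"
    have "((\<lambda>x. (x - u) * f x) has_real_derivative f x + (x - u) * f' x) (at x)"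
      using der[OF x] by (auto intro!: derivative_eq_intros)
    then show "((\<lambda>x. (x - u) * f x) has_vector_derivative f x + (x - u) * f' x) (at x within {s..e})"
      by (simp add: has_real_derivative_iff_has_vector_derivative has_vector_derivative_at_within)
  qed
  from has_integral_diff[OF this f] show ?thesis by simp
qed

lemma absolutely_integrable_affine_times:
  fixes g :: "real \<Rightarrow> real" and s e u :: real
  assumes "g absolutely_integrable_on {s..e}"
  shows "(\<lambda>x. (x - u) * g x) absolutely_integrable_on {s..e}"
  by (intro absolutely_integrable_bounded_measurable_product_real assms compact_imp_bounded
      compact_continuous_image continuous_imp_measurable_on_sets_lebesgue)
    (auto intro!: continuous_intros)

lemma abs_integral_affine_times_deriv_le:
  fixes f f' :: "real \<Rightarrow> real" and s e u p q A :: real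
  assumes der: "\<And>x. x \<in> {s..e} \<Longrightarrow> (f has_real_derivative f' x) (at x)"
    and int: "f' absolutely_integrable_on {s..e}"
    and conv: "convex_on {s..e} (\<lambda>x. \<bar>f' x\<bar> powr q)"
    and pq: "p > 1" "q > 1" "1 / p + 1 / q = 1"
    and kern: "((\<lambda>x. \<bar>x - u\<bar> powr p) has_integral A) {s..e}"
  shows "\<bar>integral {s..e} (\<lambda>x. (x - u) * f' x)\<bar>
           \<le> A powr (1 / p) * ((e - s) * (\<bar>f' s\<bar> powr q + \<bar>f' e\<bar> powr q) / 2) powr (1 / q)"
proof (cases "s < e")
  case False
  then have "integral {s..e} (\<lambda>x. (x - u) * f' x) = 0"
    by (cases "s = e") auto
  then show ?thesis by simp
next
  case True
  define M where "M = (e - s) * (\<bar>f' s\<bar> powr q + \<bar>f' e\<bar> powr q) / 2"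
  have "(\<lambda>x. \<bar>f' x\<bar>) \<in> borel_measurable (lebesgue_on {s..e})"
    using int by (intro integrable_imp_measurable) (simp add: absolutely_integrable_on_def)
  then have iG: "(\<lambda>x. \<bar>f' x\<bar> powr q) integrable_on {s..e}"
    using convex_on_integrable_on_Icc[OF True conv] powr_real_measurable by simp
  have iFG: "(\<lambda>x. \<bar>x - u\<bar> * \<bar>f' x\<bar>) integrable_on {s..e}"
    using absolutely_integrable_affine_times[OF int, of u]
    by (simp add: absolutely_integrable_on_def abs_mult)
  have "(\<lambda>x. (x - u) * f' x) integrable_on {s..e}"
    using has_integral_affine_times_deriv[OF der, where u = u] True by fastforce
  then have "\<bar>integral {s..e} (\<lambda>x. (x - u) * f' x)\<bar> \<le> integral {s..e} (\<lambda>x. \<bar>x - u\<bar> * \<bar>f' x\<bar>)"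
    using integral_norm_bound_integral[OF _ iFG] by (force simp: abs_mult)
  also have "\<dots> \<le> A powr (1 / p) * M powr (1 / q)"
  proof (cases "M = 0")
    case True
    then have "\<bar>f' s\<bar> powr q = 0" "\<bar>f' e\<bar> powr q = 0"
      using \<open>s < e\<close> by (auto simp: M_def add_nonneg_eq_0_iff)
    then have "\<bar>f' x\<bar> powr q \<le> 0" if "x \<in> {s..e}" for x
      using convex_on_Icc_le_chord[OF \<open>s < e\<close> conv that] by simp
    then have "f' x = 0" if "x \<in> {s..e}" for x
      using that powr_ge_zero[of "\<bar>f' x\<bar>" q] by fastforce
    then have "integral {s..e} (\<lambda>x. \<bar>x - u\<bar> * \<bar>f' x\<bar>) = integral {s..e} (\<lambda>x. 0)"
      by (intro integral_cong) simp
    then show ?thesis using True by simp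
  next
    case False
    have "M \<ge> 0" using \<open>s < e\<close> by (simp add: M_def)
    with False have "M > 0" by simp
    have GM: "integral {s..e} (\<lambda>x. \<bar>f' x\<bar> powr q) \<le> M"
      unfolding M_def by (rule integral_convex_on_le_trapezoid[OF \<open>s < e\<close> conv iG])
    have FA: "integral {s..e} (\<lambda>x. \<bar>x - u\<bar> powr p) \<le> A"
      using integral_unique[OF kern] by simp
    have "A > 0"
      using has_integral_abs_diff_powr_pos[OF _ \<open>s < e\<close> kern] pq(1) by simp
    from Holder_integral_le[OF pq _ _ has_integral_integrable[OF kern] iG iFG FA GM this \<open>M > 0\<close>]
    show ?thesis by simp
  qed
  finally show ?thesis by (simp add: M_def)
qed

lemma conjugate_powr_rescale:
  fixes B E C p q :: real
  assumes "B > 0" and "E \<ge> 0" and "C \<ge> 0" and "p > 0" and "1 / p + 1 / q = 1"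
  shows "(B powr (p + 1) * E / (p + 1)) powr (1 / p) * (B * C / 2) powr (1 / q)
           = B\<^sup>2 * ((1 / (p + 1)) powr (1 / p) * (1 / 2) powr (1 / q) * (E powr (1 / p) * C powr (1 / q)))"
proof -
  have "B powr ((p + 1) / p) * B powr (1 / q) = B\<^sup>2"
  proof -
    have "(p + 1) / p + 1 / q = 2" using assms(4,5) by (simp add: add_divide_distrib)
    then show ?thesis using assms(1) by (simp flip: powr_add)
  qed
  moreover have "(B powr (p + 1) * E / (p + 1)) powr (1 / p) = B powr ((p + 1) / p) * (1 / (p + 1)) powr (1 / p) * E powr (1 / p)"
    using assms by (simp add: powr_mult powr_divide powr_powr)
  moreover have "(B * C / 2) powr (1 / q) = B powr (1 / q) * (1 / 2) powr (1 / q) * C powr (1 / q)"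
    using assms by (simp add: powr_mult powr_divide)
  ultimately show ?thesis by (simp add: ac_simps)
qed

lemma abs_integral_affine_times_deriv_le_scaled:
  fixes f f' :: "real \<Rightarrow> real" and s e u p q B t E :: real
  assumes der: "\<And>x. x \<in> {s..e} \<Longrightarrow> (f has_real_derivative f' x) (at x)"
    and int: "f' absolutely_integrable_on {s..e}"
    and conv: "convex_on {s..e} (\<lambda>x. \<bar>f' x\<bar> powr q)"
    and pq: "p > 1" "q > 1" "1 / p + 1 / q = 1"
    and "B > 0" and "0 \<le> t" and len: "e - s = t * B"
    and kern: "((\<lambda>x. \<bar>x - u\<bar> powr p) has_integral B powr (p + 1) * E / (p + 1)) {s..e}"
  shows "\<bar>integral {s..e} (\<lambda>x. (x - u) * f' x)\<bar>
           \<le> B\<^sup>2 * ((1 / (p + 1)) powr (1 / p) * (1 / 2) powr (1 / q)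
                * (E powr (1 / p) * (t * (\<bar>f' s\<bar> powr q + \<bar>f' e\<bar> powr q)) powr (1 / q)))"
proof -
  have "E \<ge> 0"
    using has_integral_nonneg[OF kern] \<open>B > 0\<close> pq(1) by (simp add: zero_le_mult_iff zero_le_divide_iff)
  moreover have "t * (\<bar>f' s\<bar> powr q + \<bar>f' e\<bar> powr q) \<ge> 0"
    using \<open>0 \<le> t\<close> by simp
  moreover have "\<bar>integral {s..e} (\<lambda>x. (x - u) * f' x)\<bar>
      \<le> (B powr (p + 1) * E / (p + 1)) powr (1 / p) * (B * (t * (\<bar>f' s\<bar> powr q + \<bar>f' e\<bar> powr q)) / 2) powr (1 / q)"
    using abs_integral_affine_times_deriv_le[OF der int conv pq kern] by (simp add: len ac_simps)
  ultimately show ?thesis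
    using conjugate_powr_rescale \<open>B > 0\<close> pq by simp
qed

lemma I_f_eq_sum_kernel_integrals:
  fixes f f' :: "real \<Rightarrow> real" and a b al lam :: real
  assumes der: "\<And>x. x \<in> {a..b} \<Longrightarrow> (f has_real_derivative f' x) (at x)"
    and "a < b" and "0 \<le> al" and "al \<le> 1"
  defines "c \<equiv> al * a + (1 - al) * b"
    and "u \<equiv> a + al * lam * (b - a)" and "v \<equiv> b - lam * (1 - al) * (b - a)"
  shows "(b - a) * I_f f lam al a b
           = integral {a..c} (\<lambda>x. (x - u) * f' x) + integral {c..b} (\<lambda>x. (x - v) * f' x)"
proof -
  have "c - a = (1 - al) * (b - a)" and "b - c = al * (b - a)"
    by (simp_all add: c_def algebra_simps)
  then have ac: "a \<le> c" and cb: "c \<le> b"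
    using assms(2-4) mult_nonneg_nonneg[of "1 - al" "b - a"] mult_nonneg_nonneg[of al "b - a"] by linarith+
  have der_ac: "\<And>x. x \<in> {a..c} \<Longrightarrow> (f has_real_derivative f' x) (at x)"
    and der_cb: "\<And>x. x \<in> {c..b} \<Longrightarrow> (f has_real_derivative f' x) (at x)"
    using der ac cb by simp_all
  have left: "integral {a..c} (\<lambda>x. (x - u) * f' x) = (c - u) * f c - (a - u) * f a - integral {a..c} f"
    using has_integral_affine_times_deriv[OF der_ac ac] by (rule integral_unique)
  have right: "integral {c..b} (\<lambda>x. (x - v) * f' x) = (b - v) * f b - (c - v) * f c - integral {c..b} f"
    using has_integral_affine_times_deriv[OF der_cb cb] by (rule integral_unique)
  have "continuous_on {a..b} f"
    using der by (intro continuous_at_imp_continuous_on) (meson DERIV_isCont)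
  then have split: "integral {a..c} f + integral {c..b} f = integral {a..b} f"
    by (intro Henstock_Kurzweil_Integration.integral_combine ac cb integrable_continuous_interval)
  show ?thesis
    using \<open>a < b\<close> unfolding left right I_f_def split[symmetric]
    by (simp add: c_def u_def v_def field_simps)
qed

lemma has_integral_left_kernel:
  fixes p a b al lam :: real
  assumes "p > 0" and "a < b" and "0 \<le> al" and "al \<le> 1" and "0 \<le> lam"
  defines "c \<equiv> al * a + (1 - al) * b" and "u \<equiv> a + al * lam * (b - a)"
  shows "al * lam \<le> 1 - al \<Longrightarrow>
           ((\<lambda>x. \<bar>x - u\<bar> powr p) has_integral (b - a) powr (p + 1) * eps1 al lam p / (p + 1)) {a..c}"
    and "1 - al \<le> al * lam \<Longrightarrow>
           ((\<lambda>x. \<bar>x - u\<bar> powr p) has_integral (b - a) powr (p + 1) * eps2 al lam p / (p + 1)) {a..c}"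
proof -
  have B: "0 \<le> b - a" using assms(2) by simp
  have scale: "(t * (b - a)) powr (p + 1) = (b - a) powr (p + 1) * t powr (p + 1)" if "0 \<le> t" for t
    using that B by (simp add: powr_mult)
  have ua: "u - a = al * lam * (b - a)" by (simp add: u_def)
  have t1: "0 \<le> al * lam" using assms by simp
  then have au: "a \<le> u" using ua mult_nonneg_nonneg[OF t1 B] by linarith
  show "((\<lambda>x. \<bar>x - u\<bar> powr p) has_integral (b - a) powr (p + 1) * eps1 al lam p / (p + 1)) {a..c}"
    if "al * lam \<le> 1 - al"
  proof -
    have cu: "c - u = (1 - al - al * lam) * (b - a)" by (simp add: c_def u_def algebra_simps)
    have t2: "0 \<le> 1 - al - al * lam" using that by simp
    then have "u \<le> c" using cu mult_nonneg_nonneg[OF t2 B] by linarith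
    then have "((\<lambda>x. \<bar>x - u\<bar> powr p) has_integral ((u - a) powr (p + 1) + (c - u) powr (p + 1)) / (p + 1)) {a..c}"
      by (rule has_integral_abs_diff_powr_between[OF assms(1) au])
    moreover have "(u - a) powr (p + 1) + (c - u) powr (p + 1) = (b - a) powr (p + 1) * eps1 al lam p"
      unfolding ua cu eps1_def scale[OF t1] scale[OF t2] by (simp add: distrib_left)
    ultimately show ?thesis by simp
  qed
  show "((\<lambda>x. \<bar>x - u\<bar> powr p) has_integral (b - a) powr (p + 1) * eps2 al lam p / (p + 1)) {a..c}"
    if "1 - al \<le> al * lam"
  proof -
    have uc: "u - c = (al * lam - 1 + al) * (b - a)" by (simp add: c_def u_def algebra_simps)
    have ca: "c - a = (1 - al) * (b - a)" by (simp add: c_def algebra_simps)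
    have t2: "0 \<le> al * lam - 1 + al" using that by simp
    have "c \<le> u" using uc mult_nonneg_nonneg[OF t2 B] by linarith
    moreover have "a \<le> c" using ca assms(4) mult_nonneg_nonneg[OF _ B, of "1 - al"] by linarith
    ultimately have "((\<lambda>x. \<bar>x - u\<bar> powr p) has_integral ((u - a) powr (p + 1) - (u - c) powr (p + 1)) / (p + 1)) {a..c}"
      using has_integral_abs_diff_powr_left[OF assms(1)] by blast
    moreover have "(u - a) powr (p + 1) - (u - c) powr (p + 1) = (b - a) powr (p + 1) * eps2 al lam p"
      unfolding ua uc eps2_def scale[OF t1] scale[OF t2] by (simp add: right_diff_distrib)
    ultimately show ?thesis by simp
  qed
qed

lemma has_integral_right_kernel:
  fixes p a b al lam :: real
  assumes "p > 0" and "a < b" and "0 \<le> al" and "al \<le> 1" and "0 \<le> lam"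
  defines "c \<equiv> al * a + (1 - al) * b" and "v \<equiv> b - lam * (1 - al) * (b - a)"
  shows "1 - al \<le> 1 - lam * (1 - al) \<Longrightarrow>
           ((\<lambda>x. \<bar>x - v\<bar> powr p) has_integral (b - a) powr (p + 1) * eps1 (1 - al) lam p / (p + 1)) {c..b}"
    and "1 - lam * (1 - al) \<le> 1 - al \<Longrightarrow>
           ((\<lambda>x. \<bar>x - v\<bar> powr p) has_integral (b - a) powr (p + 1) * eps2 (1 - al) lam p / (p + 1)) {c..b}"
proof -
  have B: "0 \<le> b - a" using assms(2) by simp
  have scale: "(t * (b - a)) powr (p + 1) = (b - a) powr (p + 1) * t powr (p + 1)" if "0 \<le> t" for t
    using that B by (simp add: powr_mult)
  have bv: "b - v = (1 - al) * lam * (b - a)" by (simp add: v_def)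
  have t1: "0 \<le> (1 - al) * lam" using assms by simp
  then have vb: "v \<le> b" using bv mult_nonneg_nonneg[OF t1 B] by linarith
  show "((\<lambda>x. \<bar>x - v\<bar> powr p) has_integral (b - a) powr (p + 1) * eps1 (1 - al) lam p / (p + 1)) {c..b}"
    if "1 - al \<le> 1 - lam * (1 - al)"
  proof -
    have vc: "v - c = (1 - (1 - al) - (1 - al) * lam) * (b - a)" by (simp add: c_def v_def algebra_simps)
    have t2: "0 \<le> 1 - (1 - al) - (1 - al) * lam" using that by (simp add: algebra_simps)
    then have "c \<le> v" using vc mult_nonneg_nonneg[OF t2 B] by linarith
    then have "((\<lambda>x. \<bar>x - v\<bar> powr p) has_integral ((v - c) powr (p + 1) + (b - v) powr (p + 1)) / (p + 1)) {c..b}"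
      using has_integral_abs_diff_powr_between[OF assms(1) _ vb] by blast
    moreover have "(v - c) powr (p + 1) + (b - v) powr (p + 1) = (b - a) powr (p + 1) * eps1 (1 - al) lam p"
      unfolding vc bv eps1_def scale[OF t1] scale[OF t2] by (simp add: algebra_simps)
    ultimately show ?thesis by simp
  qed
  show "((\<lambda>x. \<bar>x - v\<bar> powr p) has_integral (b - a) powr (p + 1) * eps2 (1 - al) lam p / (p + 1)) {c..b}"
    if "1 - lam * (1 - al) \<le> 1 - al"
  proof -
    have cv: "c - v = ((1 - al) * lam - 1 + (1 - al)) * (b - a)" by (simp add: c_def v_def algebra_simps)
    have bc: "b - c = al * (b - a)" by (simp add: c_def algebra_simps)
    have t2: "0 \<le> (1 - al) * lam - 1 + (1 - al)" using that by (simp add: algebra_simps)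
    have "v \<le> c" using cv mult_nonneg_nonneg[OF t2 B] by linarith
    moreover have "c \<le> b" using bc mult_nonneg_nonneg[OF assms(3) B] by linarith
    ultimately have "((\<lambda>x. \<bar>x - v\<bar> powr p) has_integral ((b - v) powr (p + 1) - (c - v) powr (p + 1)) / (p + 1)) {c..b}"
      using has_integral_abs_diff_powr_right[OF assms(1)] by blast
    moreover have "(b - v) powr (p + 1) - (c - v) powr (p + 1) = (b - a) powr (p + 1) * eps2 (1 - al) lam p"
      unfolding bv cv eps2_def scale[OF t1] scale[OF t2] by (simp add: right_diff_distrib)
    ultimately show ?thesis by simp
  qed
qed

lemma abs_I_f_le_kernel_integrals:
  fixes f f' :: "real \<Rightarrow> real" and a b al lam p q E1 E2 :: real
  assumes der: "\<And>x. x \<in> {a..b} \<Longrightarrow> (f has_real_derivative f' x) (at x)"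
    and int: "f' absolutely_integrable_on {a..b}"
    and conv: "convex_on {a..b} (\<lambda>x. \<bar>f' x\<bar> powr q)"
    and pq: "p > 1" "q > 1" "1 / p + 1 / q = 1"
    and "a < b" and "0 \<le> al" and "al \<le> 1"
  defines "c \<equiv> al * a + (1 - al) * b"
  assumes K1: "((\<lambda>x. \<bar>x - (a + al * lam * (b - a))\<bar> powr p) has_integral (b - a) powr (p + 1) * E1 / (p + 1)) {a..c}"
    and K2: "((\<lambda>x. \<bar>x - (b - lam * (1 - al) * (b - a))\<bar> powr p) has_integral (b - a) powr (p + 1) * E2 / (p + 1)) {c..b}"
  shows "\<bar>I_f f lam al a b\<bar> \<le> (b - a) * (1 / (p + 1)) powr (1 / p) * (1 / 2) powr (1 / q) *
           (E1 powr (1 / p) * C_f f' a b al q powr (1 / q) + E2 powr (1 / p) * D_f f' a b al q powr (1 / q))"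
proof -
  define K where "K \<equiv> (1 / (p + 1)) powr (1 / p) * (1 / 2) powr (1 / q)"
  have B: "b - a > 0" using \<open>a < b\<close> by simp
  have ca: "c - a = (1 - al) * (b - a)" and bc: "b - c = al * (b - a)"
    by (simp_all add: c_def algebra_simps)
  then have "a \<le> c" "c \<le> b"
    using mult_nonneg_nonneg[of "1 - al" "b - a"] mult_nonneg_nonneg[of al "b - a"] B assms(8,9) by linarith+
  then have sub: "{a..c} \<subseteq> {a..b}" "{c..b} \<subseteq> {a..b}" by auto
  have piece: "\<bar>integral {s..e} (\<lambda>x. (x - u) * f' x)\<bar>
                 \<le> (b - a)\<^sup>2 * (K * (E powr (1 / p) * (t * (\<bar>f' s\<bar> powr q + \<bar>f' e\<bar> powr q)) powr (1 / q)))"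
    if "{s..e} \<subseteq> {a..b}" "0 \<le> t" "e - s = t * (b - a)"
      and "((\<lambda>x. \<bar>x - u\<bar> powr p) has_integral (b - a) powr (p + 1) * E / (p + 1)) {s..e}" for s e u t E
    using that der absolutely_integrable_on_subinterval[OF int] convex_on_subset[OF conv] B
    unfolding K_def
    by (intro abs_integral_affine_times_deriv_le_scaled[where f = f, OF _ _ _ pq]) auto
  have "C_f f' a b al q = (1 - al) * (\<bar>f' a\<bar> powr q + \<bar>f' c\<bar> powr q)"
    and "D_f f' a b al q = al * (\<bar>f' c\<bar> powr q + \<bar>f' b\<bar> powr q)"
    by (simp_all add: C_f_def D_f_def c_def ac_simps)
  then have P1: "\<bar>integral {a..c} (\<lambda>x. (x - (a + al * lam * (b - a))) * f' x)\<bar>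
                   \<le> (b - a)\<^sup>2 * (K * (E1 powr (1 / p) * C_f f' a b al q powr (1 / q)))"
    and P2: "\<bar>integral {c..b} (\<lambda>x. (x - (b - lam * (1 - al) * (b - a))) * f' x)\<bar>
                   \<le> (b - a)\<^sup>2 * (K * (E2 powr (1 / p) * D_f f' a b al q powr (1 / q)))"
    using piece[OF sub(1) _ ca K1] piece[OF sub(2) _ bc K2] assms(8,9) by simp_all
  have parts: "(b - a) * I_f f lam al a b
                 = integral {a..c} (\<lambda>x. (x - (a + al * lam * (b - a))) * f' x)
                   + integral {c..b} (\<lambda>x. (x - (b - lam * (1 - al) * (b - a))) * f' x)"
    unfolding c_def by (rule I_f_eq_sum_kernel_integrals[OF der \<open>a < b\<close> assms(8,9)])
  have "(b - a) * \<bar>I_f f lam al a b\<bar> = \<bar>(b - a) * I_f f lam al a b\<bar>"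
    using B by (simp add: abs_mult)
  also have "\<dots> \<le> \<bar>integral {a..c} (\<lambda>x. (x - (a + al * lam * (b - a))) * f' x)\<bar>
                 + \<bar>integral {c..b} (\<lambda>x. (x - (b - lam * (1 - al) * (b - a))) * f' x)\<bar>"
    unfolding parts by (rule abs_triangle_ineq)
  also have "\<dots> \<le> (b - a)\<^sup>2 * (K * (E1 powr (1 / p) * C_f f' a b al q powr (1 / q)))
                 + (b - a)\<^sup>2 * (K * (E2 powr (1 / p) * D_f f' a b al q powr (1 / q)))"
    using P1 P2 by (rule add_mono)
  also have "\<dots> = (b - a) * ((b - a) * K * (E1 powr (1 / p) * C_f f' a b al q powr (1 / q)
                                             + E2 powr (1 / p) * D_f f' a b al q powr (1 / q)))"
    by (simp add: power2_eq_square algebra_simps)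
  finally have "\<bar>I_f f lam al a b\<bar> \<le> (b - a) * K * (E1 powr (1 / p) * C_f f' a b al q powr (1 / q)
                                                     + E2 powr (1 / p) * D_f f' a b al q powr (1 / q))"
    using B by (simp only: mult_le_cancel_left_pos)
  then show ?thesis
    by (simp only: K_def mult.assoc)
qed

theorem mainTheorem4:
  fixes I :: "real set" and f f' :: "real \<Rightarrow> real" and a b al lam p q :: real
  assumes "is_interval I"
    and "\<And>x. x \<in> interior I \<Longrightarrow> (f has_real_derivative f' x) (at x)"
    and "a \<in> interior I" and "b \<in> interior I" and "a < b"
    and "set_integrable lborel {a..b} f'"
    and "0 \<le> al" and "al \<le> 1" and "0 \<le> lam" and "lam \<le> 1"
    and "q > 1" and "1 / p + 1 / q = 1"
    and "convex_on {a..b} (\<lambda>x. \<bar>f' x\<bar> powr q)"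
  shows
   "(al * lam \<le> 1 - al \<and> 1 - al \<le> 1 - lam * (1 - al) \<longrightarrow>
      \<bar>I_f f lam al a b\<bar> \<le> (b - a) * (1 / (p + 1)) powr (1 / p) * (1 / 2) powr (1 / q) *
        (eps1 al lam p powr (1 / p) * C_f f' a b al q powr (1 / q)
         + eps1 (1 - al) lam p powr (1 / p) * D_f f' a b al q powr (1 / q)))
  \<and> (al * lam \<le> 1 - lam * (1 - al) \<and> 1 - lam * (1 - al) \<le> 1 - al \<longrightarrow>
      \<bar>I_f f lam al a b\<bar> \<le> (b - a) * (1 / (p + 1)) powr (1 / p) * (1 / 2) powr (1 / q) *
        (eps1 al lam p powr (1 / p) * C_f f' a b al q powr (1 / q)
         + eps2 (1 - al) lam p powr (1 / p) * D_f f' a b al q powr (1 / q)))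
  \<and> (1 - al \<le> al * lam \<and> al * lam \<le> 1 - lam * (1 - al) \<longrightarrow>
      \<bar>I_f f lam al a b\<bar> \<le> (b - a) * (1 / (p + 1)) powr (1 / p) * (1 / 2) powr (1 / q) *
        (eps2 al lam p powr (1 / p) * C_f f' a b al q powr (1 / q)
         + eps1 (1 - al) lam p powr (1 / p) * D_f f' a b al q powr (1 / q)))"
proof -
  have p: "p > 1" using conjugate_exponent_gt_1 assms(11,12) by blast
  have "is_interval (interior I)"
    using assms(1) by (simp add: is_interval_convex_1 convex_interior)
  then have der: "\<And>x. x \<in> {a..b} \<Longrightarrow> (f has_real_derivative f' x) (at x)"
    using assms(2) mem_is_interval_1_I[of "interior I", OF _ assms(3,4)] by auto
  have int: "f' absolutely_integrable_on {a..b}"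
    using assms(6) unfolding absolutely_integrable_on_def set_integrable_def
    by (simp add: integrable_completion borel_measurable_integrable)
  have p0: "p > 0" using p by simp
  note bound = abs_I_f_le_kernel_integrals[OF der int assms(13) p assms(11,12,5,7,8)]
  note left = has_integral_left_kernel[OF p0 assms(5,7,8,9)]
  note right = has_integral_right_kernel[OF p0 assms(5,7,8,9)]
  have lam_le: "al * lam \<le> al" "lam * (1 - al) \<le> 1 - al"
    using assms(7-10) by (simp_all add: mult_left_le mult_left_le_one_le)
  \<comment> \<open>Each case, with lam_le, decides on which side of c the nodes u and v lie.\<close>
  show ?thesis
    using lam_le by (intro conjI impI; elim conjE; intro bound left right; linarith)
qed

end
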